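(* Let $\xi\in\mathbb{R}$, let $n\ge 2$, $t_1<\dots<t_n$, $\Delta:=\max_{1\le j\le n-1}(t_{j+1}-t_j)$, and let $F\in C^4[t_1,t_n]$. Let $I_4(F)$ be an exponential spline of order $4$ for the operator $L_{(\xi,\xi,-\xi,-\xi)}=\left(\frac{d^2}{dt^2}-\xi^2\right)^2$ with knots $t_1,\dots,t_n$ satisfying $I_4(F)(t_j)=F(t_j)$ for $j=1,\dots,n$, $\frac{d}{dt}I_4(F)(t_1)=F'(t_1)$ and $\frac{d}{dt}I_4(F)(t_n)=F'(t_n)$. Then $$\max_{t\in[t_1,t_n]}|F(t)-I_4(F)(t)|\le \frac{5}{64}\,\Delta^4\max_{\theta\in[t_1,t_n]}\left|L_{(\xi,\xi,-\xi,-\xi)}F(\theta)\right|.$$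
   Context: For real $\lambda_0,\dots,\lambda_N$, $L_{(\lambda_0,\dots,\lambda_N)}=\prod_{j=0}^N\left(\frac{d}{dt}-\lambda_j\right)$ and $E(\lambda_0,\dots,\lambda_N)=\{f\in C^{N+1}(\mathbb{R}):L_{(\lambda_0,\dots,\lambda_N)}f=0\}$. An exponential spline for the knots $t_1<\dots<t_n$ and the operator $L_{(\lambda_0,\dots,\lambda_N)}$ is a function $g\in C^{N-1}[t_1,t_n]$ whose restriction to each interval $[t_j,t_{j+1}]$ coincides with an element of $E(\lambda_0,\dots,\lambda_N)$. *)

theory Defs
  imports "HOL-Analysis.Analysis"
begin

definition deriv_chain :: "nat \<Rightarrow> real set \<Rightarrow> (real \<Rightarrow> real) \<Rightarrow> (nat \<Rightarrow> real \<Rightarrow> real) \<Rightarrow> bool" where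
  "deriv_chain k S f D \<longleftrightarrow>
     (\<forall>x\<in>S. D 0 x = f x) \<and>
     (\<forall>i<k. \<forall>x\<in>S. (D i has_real_derivative D (Suc i) x) (at x within S)) \<and>
     continuous_on S (D k)"

definition Ck :: "nat \<Rightarrow> real set \<Rightarrow> (real \<Rightarrow> real) \<Rightarrow> bool" where
  "Ck k S f \<longleftrightarrow> (\<exists>D. deriv_chain k S f D)"

text \<open>Applying the operator (d/dt - l_0)...(d/dt - l_N) to a derivative chain D:
  Lchain ls D i is the i-th derivative of L_ls f.  The value L_ls f is Lchain ls D 0.\<close>
fun Lchain :: "real list \<Rightarrow> (nat \<Rightarrow> real \<Rightarrow> real) \<Rightarrow> nat \<Rightarrow> real \<Rightarrow> real" where
  "Lchain [] D = D"
| "Lchain (l # ls) D = (\<lambda>i t. Lchain ls D (Suc i) t - l * Lchain ls D i t)"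

definition Espace :: "real list \<Rightarrow> (real \<Rightarrow> real) \<Rightarrow> bool" where
  "Espace ls f \<longleftrightarrow> (\<exists>D. deriv_chain (length ls) UNIV f D \<and> (\<forall>t. Lchain ls D 0 t = 0))"

definition exp_spline :: "real list \<Rightarrow> (nat \<Rightarrow> real) \<Rightarrow> nat \<Rightarrow> (real \<Rightarrow> real) \<Rightarrow> bool" where
  "exp_spline ls ts n g \<longleftrightarrow>
     Ck (length ls - 2) {ts 1..ts n} g \<and>
     (\<forall>j. 1 \<le> j \<and> j < n \<longrightarrow> (\<exists>h. Espace ls h \<and> (\<forall>t\<in>{ts j..ts (Suc j)}. g t = h t)))"

end

theory Submission
  imports Defs
begin

(* On a knot interval [a, b] of length h the error e = F - I_4(F) vanishes at a and b, and
   |(D^2 - xi^2)^2 e| <= M because the spline piece is annihilated by the operator.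
   With s = e'' - xi^2 e we have s'' - xi^2 s = (D^2 - xi^2)^2 e, so the maximum principle for
   u'' - xi^2 u, applied first to s and then to e, gives |e| <= h^2/8 (A + h^2/8 M), where A
   bounds |s| at the knots.
   To bound A, look at a knot where |s| is maximal. A Green identity with explicit hyperbolic
   test functions shows that if |s| exceeded Delta^2/4 M there, e' s would be negative when seen
   from the interval to the right of the knot and positive when seen from the interval to its
   left. Both intervals share e' and s at the knot because the spline is C^2, and e' vanishes
   at the two end knots by the clamped end conditions. Hence A <= Delta^2/4 M, and
   |e| <= Delta^2/8 (Delta^2/4 + Delta^2/8) M = 3/64 Delta^4 M. *)

section \<open>Hyperbolic inequalities\<close>

lemma sinh_le_mult_cosh:
  fixes z :: real
  assumes "0 \<le> z"
  shows "sinh z \<le> z * cosh z"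
proof -
  have "(\<lambda>t. t * cosh t - sinh t) 0 \<le> (\<lambda>t. t * cosh t - sinh t) z"
  proof (rule DERIV_nonneg_imp_increasing_open[OF assms])
    fix x :: real
    assume "0 < x" "x < z"
    then show "\<exists>y. ((\<lambda>t. t * cosh t - sinh t) has_real_derivative y) (at x) \<and> 0 \<le> y"
      by (intro exI[of _ "x * sinh x"]) (auto intro!: derivative_eq_intros)
  qed (intro continuous_intros)
  then show ?thesis
    by simp
qed

lemma self_less_sinh:
  fixes z :: real
  assumes "0 < z"
  shows "z < sinh z"
proof -
  have "(\<lambda>t. sinh t - t) 0 < (\<lambda>t. sinh t - t) z"
  proof (rule DERIV_pos_imp_increasing_open[OF assms])
    fix x :: real
    assume "0 < x" "x < z"
    then have "cosh x \<noteq> 1"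
      by simp
    then have "1 < cosh x"
      using cosh_real_ge_1[of x] by (metis order_less_le)
    then show "\<exists>y. ((\<lambda>t. sinh t - t) has_real_derivative y) (at x) \<and> 0 < y"
      by (intro exI[of _ "cosh x - 1"]) (auto intro!: derivative_eq_intros)
  qed (intro continuous_intros)
  then show ?thesis
    by simp
qed

lemma sinh_minus_self_div_pos:
  fixes \<xi> h :: real
  assumes "\<xi> \<noteq> 0" "0 < h"
  shows "0 < (sinh (\<xi> * h) - \<xi> * h) / (2 * \<xi> * (sinh (\<xi> * h))\<^sup>2)"
proof (cases "0 < \<xi>")
  case True
  then have "\<xi> * h < sinh (\<xi> * h)"
    using self_less_sinh assms by simp
  with True assms show ?thesis
    by (intro divide_pos_pos) auto
next
  case False
  with assms have "\<xi> < 0"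
    by simp
  then have "sinh (\<xi> * h) < \<xi> * h"
    using self_less_sinh[of "- \<xi> * h"] assms by (simp add: mult_neg_pos)
  with \<open>\<xi> < 0\<close> assms show ?thesis
    by (intro divide_neg_neg) (auto simp: mult_less_0_iff)
qed

lemma sinh_mult_div_sinh_mult_nonneg:
  fixes \<xi> s t :: real
  assumes "0 \<le> s" "0 < t"
  shows "0 \<le> sinh (\<xi> * s) / sinh (\<xi> * t)"
  using assms by (auto simp: zero_le_divide_iff zero_le_mult_iff mult_le_0_iff)

lemma cosh_minus_one_le:
  fixes x :: real
  shows "4 * (cosh x - 1) \<le> x\<^sup>2 * (cosh x + 1)"
proof -
  define z where "z = \<bar>x\<bar> / 2"
  have "0 \<le> z"
    by (simp add: z_def)
  have cosh_x: "cosh x = cosh (2 * z)"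
    by (simp add: z_def)
  have "sinh z \<le> z * cosh z" "0 \<le> sinh z"
    using sinh_le_mult_cosh \<open>0 \<le> z\<close> by auto
  then have "(sinh z)\<^sup>2 \<le> z\<^sup>2 * (cosh z)\<^sup>2"
    by (metis power_mono power_mult_distrib)
  moreover have "cosh (2 * z) - 1 = 2 * (sinh z)\<^sup>2" "cosh (2 * z) + 1 = 2 * (cosh z)\<^sup>2"
    by (simp_all add: cosh_double cosh_square_eq)
  moreover have "x\<^sup>2 = 4 * z\<^sup>2"
    by (simp add: z_def power2_eq_square)
  ultimately show ?thesis
    by (simp add: cosh_x)
qed

section \<open>Calculus and a maximum principle on a closed interval\<close>

lemma has_real_derivative_unique_Icc:
  fixes f :: "real \<Rightarrow> real"
  assumes "a < b" "x \<in> {a..b}"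
    and "(f has_real_derivative d1) (at x within {a..b})"
    and "(f has_real_derivative d2) (at x within {a..b})"
  shows "d1 = d2"
  using vector_derivative_unique_within_closed_interval[of a b x f d1 d2] assms
  by (simp add: has_real_derivative_iff_has_vector_derivative cbox_interval)

lemma DERIV_nonneg_imp_le_Icc:
  fixes f f' :: "real \<Rightarrow> real"
  assumes "a \<le> b"
    and deriv: "\<And>y. y \<in> {a..b} \<Longrightarrow> (f has_real_derivative f' y) (at y within {a..b})"
    and nonneg: "\<And>y. y \<in> {a..b} \<Longrightarrow> 0 \<le> f' y"
  shows "f a \<le> f b"
proof (rule DERIV_nonneg_imp_increasing_open[OF assms(1)])
  fix x
  assume "a < x" "x < b"
  then show "\<exists>y. (f has_real_derivative y) (at x) \<and> 0 \<le> y"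
    using deriv[of x] nonneg[of x] by (auto simp: at_within_Icc_at)
next
  show "continuous_on {a..b} f"
    using DERIV_continuous_on[OF deriv] .
qed

lemma local_max_imp_second_deriv_nonpos:
  fixes f f' f'' :: "real \<Rightarrow> real"
  assumes "a < c" "c < b"
    and d1: "\<And>y. a < y \<Longrightarrow> y < b \<Longrightarrow> (f has_real_derivative f' y) (at y)"
    and d2: "\<And>y. a < y \<Longrightarrow> y < b \<Longrightarrow> (f' has_real_derivative f'' y) (at y)"
    and local_max: "\<And>y. a < y \<Longrightarrow> y < b \<Longrightarrow> f y \<le> f c"
  shows "f'' c \<le> 0"
proof (rule ccontr)
  assume "\<not> f'' c \<le> 0"
  have "f' c = 0"
  proof (rule DERIV_local_max[OF d1[OF assms(1,2)]])
    show "0 < min (c - a) (b - c)"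
      using assms by simp
    show "\<forall>y. \<bar>c - y\<bar> < min (c - a) (b - c) \<longrightarrow> f y \<le> f c"
      by (auto intro!: local_max)
  qed
  obtain d where "0 < d" and inc: "\<And>h. 0 < h \<Longrightarrow> h < d \<Longrightarrow> f' c < f' (c + h)"
    using DERIV_pos_inc_right[OF d2[OF assms(1,2)]] \<open>\<not> f'' c \<le> 0\<close> by force
  define t where "t = min d (b - c) / 2"
  have t: "0 < t" "t < d" "c + t < b"
    using \<open>0 < d\<close> assms by (auto simp: t_def min_def field_simps)
  obtain z where z: "c < z" "z < c + t" "f (c + t) - f c = (c + t - c) * f' z"
    using MVT2[of c "c + t" f f'] t assms d1 by force
  have "0 < f' z"
    using inc[of "z - c"] z t \<open>f' c = 0\<close> by auto
  then have "f c < f (c + t)"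
    using z t by (simp add: algebra_simps)
  moreover have "f (c + t) \<le> f c"
    using t assms by (intro local_max) auto
  ultimately show False
    by simp
qed

lemma max_principle_nonpos:
  fixes u u' u'' :: "real \<Rightarrow> real"
  assumes "a < b" and "0 \<le> c"
    and d1: "\<And>y. y \<in> {a..b} \<Longrightarrow> (u has_real_derivative u' y) (at y within {a..b})"
    and d2: "\<And>y. y \<in> {a..b} \<Longrightarrow> (u' has_real_derivative u'' y) (at y within {a..b})"
    and ineq: "\<And>y. a < y \<Longrightarrow> y < b \<Longrightarrow> c * u y \<le> u'' y"
    and "u a \<le> 0" "u b \<le> 0" "y \<in> {a..b}"
  shows "u y \<le> 0"
proof (rule ccontr)
  assume "\<not> u y \<le> 0"
  define \<epsilon> where "\<epsilon> = u y / (b - a)\<^sup>2"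
  have "0 < \<epsilon>"
    using \<open>\<not> u y \<le> 0\<close> assms by (simp add: \<epsilon>_def)
  \<comment> \<open>The perturbation \<open>v\<close> is still positive at \<open>y\<close>, so it has an interior maximum,
      where \<open>v'' = u'' + 2 \<epsilon> > 0\<close> contradicts the second derivative test.\<close>
  define v where "v t = u t + \<epsilon> * ((t - a) * (t - b))" for t
  define v' where "v' t = u' t + \<epsilon> * (2 * t - a - b)" for t
  define v'' where "v'' t = u'' t + 2 * \<epsilon>" for t
  have dv: "(v has_real_derivative v' t) (at t within {a..b})"
    and dv': "(v' has_real_derivative v'' t) (at t within {a..b})" if "t \<in> {a..b}" for t
    unfolding v_def v'_def v''_def
    by (auto intro!: derivative_eq_intros d1[OF that] d2[OF that] simp: algebra_simps)
  obtain m where m: "m \<in> {a..b}" "\<And>t. t \<in> {a..b} \<Longrightarrow> v t \<le> v m"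
    using continuous_attains_sup[OF compact_Icc _ DERIV_continuous_on[OF dv]] assms by auto
  have "- (b - a)\<^sup>2 / 4 \<le> (y - a) * (y - b)"
    using zero_le_power2[of "2 * y - a - b"] by (simp add: power2_eq_square algebra_simps divide_simps)
  then have "\<epsilon> * (- (b - a)\<^sup>2 / 4) \<le> \<epsilon> * ((y - a) * (y - b))"
    using \<open>0 < \<epsilon>\<close> by (intro mult_left_mono) auto
  moreover have "\<epsilon> * (- (b - a)\<^sup>2 / 4) = - u y / 4"
    using assms by (simp add: \<epsilon>_def)
  ultimately have "0 < v y"
    using \<open>\<not> u y \<le> 0\<close> by (simp add: v_def)
  then have "0 < v m"
    using m \<open>y \<in> {a..b}\<close> by force
  moreover have "v a \<le> 0" "v b \<le> 0"
    using assms by (auto simp: v_def)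
  ultimately have m_inner: "a < m" "m < b"
    using m(1) by (auto simp: less_le)
  have "v'' m \<le> 0"
  proof (rule local_max_imp_second_deriv_nonpos[OF m_inner])
    fix t
    assume t: "a < t" "t < b"
    then show "(v has_real_derivative v' t) (at t)" "(v' has_real_derivative v'' t) (at t)"
      using dv[of t] dv'[of t] by (auto simp: at_within_Icc_at)
    show "v t \<le> v m"
      using m t by auto
  qed
  have "\<epsilon> * ((m - a) * (m - b)) \<le> 0"
    using m_inner \<open>0 < \<epsilon>\<close> by (intro mult_nonneg_nonpos) auto
  then have "0 < u m"
    using \<open>0 < v m\<close> by (simp add: v_def)
  then have "0 \<le> u'' m"
    using ineq[OF m_inner] \<open>0 \<le> c\<close> by (meson mult_nonneg_nonneg less_imp_le order_trans)
  with \<open>v'' m \<le> 0\<close> \<open>0 < \<epsilon>\<close> show False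
    by (simp add: v''_def)
qed

lemma max_principle_bound:
  fixes u u' u'' :: "real \<Rightarrow> real"
  assumes "a < b" "0 \<le> c" "0 \<le> A" "0 \<le> B"
    and d1: "\<And>y. y \<in> {a..b} \<Longrightarrow> (u has_real_derivative u' y) (at y within {a..b})"
    and d2: "\<And>y. y \<in> {a..b} \<Longrightarrow> (u' has_real_derivative u'' y) (at y within {a..b})"
    and ineq: "\<And>y. y \<in> {a..b} \<Longrightarrow> - B \<le> u'' y - c * u y"
    and "u a \<le> A" "u b \<le> A" "y \<in> {a..b}"
  shows "u y \<le> A + B * ((y - a) * (b - y) / 2)"
proof -
  define w where "w t = u t - A - B * ((t - a) * (b - t) / 2)" for t
  have "w y \<le> 0"
  proof (rule max_principle_nonpos[of a b c w "\<lambda>t. u' t - B * ((a + b - 2 * t) / 2)" "\<lambda>t. u'' t + B"])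
    show "(w has_real_derivative u' t - B * ((a + b - 2 * t) / 2)) (at t within {a..b})"
      if "t \<in> {a..b}" for t
      unfolding w_def by (auto intro!: derivative_eq_intros d1[OF that] simp: field_simps)
    show "((\<lambda>t. u' t - B * ((a + b - 2 * t) / 2)) has_real_derivative u'' t + B)
        (at t within {a..b})" if "t \<in> {a..b}" for t
      by (auto intro!: derivative_eq_intros d2[OF that] simp: algebra_simps)
    show "c * w t \<le> u'' t + B" if "a < t" "t < b" for t
    proof -
      have "0 \<le> c * A + c * (B * ((t - a) * (b - t) / 2))"
        using assms that by simp
      then show ?thesis
        using ineq[of t] that by (simp add: w_def algebra_simps)
    qed
  qed (use assms in \<open>auto simp: w_def\<close>)
  then show ?thesis
    by (simp add: w_def)
qed

lemma abs_le_by_max_principle: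
  fixes u u' u'' :: "real \<Rightarrow> real"
  assumes "a < b" "0 \<le> c"
    and d1: "\<And>y. y \<in> {a..b} \<Longrightarrow> (u has_real_derivative u' y) (at y within {a..b})"
    and d2: "\<And>y. y \<in> {a..b} \<Longrightarrow> (u' has_real_derivative u'' y) (at y within {a..b})"
    and ineq: "\<And>y. y \<in> {a..b} \<Longrightarrow> \<bar>u'' y - c * u y\<bar> \<le> B"
    and "\<bar>u a\<bar> \<le> A" "\<bar>u b\<bar> \<le> A" "y \<in> {a..b}"
  shows "\<bar>u y\<bar> \<le> A + (b - a)\<^sup>2 / 8 * B"
proof -
  have "0 \<le> A" "0 \<le> B"
    using assms ineq[of a] by (auto intro: order_trans[OF abs_ge_zero])
  have "u y \<le> A + B * ((y - a) * (b - y) / 2)"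
  proof (rule max_principle_bound[OF \<open>a < b\<close> \<open>0 \<le> c\<close> \<open>0 \<le> A\<close> \<open>0 \<le> B\<close> d1 d2])
    show "- B \<le> u'' t - c * u t" if "t \<in> {a..b}" for t
      using ineq[OF that] by (simp add: abs_le_iff)
  qed (use assms in \<open>auto simp: abs_le_iff\<close>)
  moreover have "- u y \<le> A + B * ((y - a) * (b - y) / 2)"
  proof (rule max_principle_bound[OF \<open>a < b\<close> \<open>0 \<le> c\<close> \<open>0 \<le> A\<close> \<open>0 \<le> B\<close>])
    show "((\<lambda>t. - u t) has_real_derivative - u' t) (at t within {a..b})"
      "((\<lambda>t. - u' t) has_real_derivative - u'' t) (at t within {a..b})" if "t \<in> {a..b}" for t
      using d1[OF that] d2[OF that] by (auto intro: derivative_intros)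
    show "- B \<le> - u'' t - c * - u t" if "t \<in> {a..b}" for t
      using ineq[OF that] by (simp add: abs_le_iff)
  qed (use assms in \<open>auto simp: abs_le_iff\<close>)
  moreover have "(y - a) * (b - y) / 2 \<le> (b - a)\<^sup>2 / 8"
    using zero_le_power2[of "2 * y - a - b"] by (simp add: power2_eq_square algebra_simps divide_simps)
  then have "B * ((y - a) * (b - y) / 2) \<le> (b - a)\<^sup>2 / 8 * B"
    using \<open>0 \<le> B\<close> mult_left_mono by (metis mult.commute)
  ultimately show ?thesis
    unfolding abs_le_iff by linarith
qed

section \<open>Test functions for the endpoint estimate\<close>

(* Pairing these test functions with the interpolation error in a Green identity expresses
   e'(a) through the values of e'' - xi^2 e at a and b, up to a remainder M (Psi a - Psi b). *)
locale endpoint_test_functions =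
  fixes \<xi> a b :: real and K K' \<Phi> \<Phi>' \<Psi> :: "real \<Rightarrow> real"
  assumes a_less_b: "a < b"
    and K_deriv: "\<And>y. (K has_real_derivative K' y) (at y)"
    and K'_deriv: "\<And>y. (K' has_real_derivative \<xi>\<^sup>2 * K y) (at y)"
    and \<Phi>_deriv: "\<And>y. (\<Phi> has_real_derivative \<Phi>' y) (at y)"
    and \<Phi>'_deriv: "\<And>y. (\<Phi>' has_real_derivative \<xi>\<^sup>2 * \<Phi> y + K y) (at y)"
    and \<Psi>_deriv: "\<And>y. (\<Psi> has_real_derivative \<Phi> y) (at y)"
    and K_left: "K a = 1" and K_right: "K b = 0"
    and \<Phi>_left: "\<Phi> a = 0" and \<Phi>_right: "\<Phi> b = 0"
    and K_nonneg: "\<And>y. y \<in> {a..b} \<Longrightarrow> 0 \<le> K y"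
    and \<Phi>'_sum_neg: "\<Phi>' a + \<Phi>' b < 0"
    and \<Psi>_diff_le: "\<Psi> a - \<Psi> b \<le> (b - a)\<^sup>2 / 4 * - (\<Phi>' a + \<Phi>' b)"
begin

lemma \<Phi>_nonpos:
  assumes "y \<in> {a..b}"
  shows "\<Phi> y \<le> 0"
proof (rule max_principle_nonpos[of a b "\<xi>\<^sup>2" \<Phi> \<Phi>' "\<lambda>t. \<xi>\<^sup>2 * \<Phi> t + K t"])
  show "(\<Phi> has_real_derivative \<Phi>' t) (at t within {a..b})"
    "(\<Phi>' has_real_derivative \<xi>\<^sup>2 * \<Phi> t + K t) (at t within {a..b})" for t
    using \<Phi>_deriv \<Phi>'_deriv by (auto intro: has_field_derivative_at_within)
  show "\<xi>\<^sup>2 * \<Phi> t \<le> \<xi>\<^sup>2 * \<Phi> t + K t" if "a < t" "t < b" for t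
    using K_nonneg that by auto
qed (use assms a_less_b \<Phi>_left \<Phi>_right in auto)

lemma \<Phi>'_right_nonneg: "0 \<le> \<Phi>' b"
proof (rule ccontr)
  assume "\<not> 0 \<le> \<Phi>' b"
  then obtain d where "0 < d" and dec: "\<And>h. 0 < h \<Longrightarrow> h < d \<Longrightarrow> \<Phi> b < \<Phi> (b - h)"
    using DERIV_neg_dec_left[OF \<Phi>_deriv[of b]] by force
  define h where "h = min d (b - a) / 2"
  have "0 < h" "h < d" "b - h \<in> {a..b}"
    using \<open>0 < d\<close> a_less_b by (auto simp: h_def min_def field_simps)
  then show False
    using dec[of h] \<Phi>_nonpos[of "b - h"] \<Phi>_right by simp
qed

end

lemma endpoint_test_functions_zero:
  fixes a b :: real
  assumes "a < b"
  shows "\<exists>K K' \<Phi> \<Phi>' \<Psi>. endpoint_test_functions 0 a b K K' \<Phi> \<Phi>' \<Psi>"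
proof -
  define h where "h = b - a"
  have "0 < h" and b: "b = a + h"
    using assms by (auto simp: h_def)
  define K where "K = (\<lambda>y. (b - y) / h)"
  define \<Phi> where "\<Phi> = (\<lambda>y. (y - a)\<^sup>2 / 2 - (y - a) ^ 3 / (6 * h) - h * (y - a) / 3)"
  define \<Phi>' where "\<Phi>' = (\<lambda>y. (y - a) - (y - a)\<^sup>2 / (2 * h) - h / 3)"
  define \<Psi> where "\<Psi> = (\<lambda>y. (y - a) ^ 3 / 6 - (y - a) ^ 4 / (24 * h) - h * (y - a)\<^sup>2 / 6)"
  have "\<Phi>' a = - h / 3" "\<Phi>' b = h / 6" "\<Psi> a - \<Psi> b = h ^ 3 / 24"
    using \<open>0 < h\<close> by (simp_all add: \<Phi>'_def \<Psi>_def b field_simps power2_eq_square power3_eq_cube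
        power4_eq_xxxx)
  then have "endpoint_test_functions 0 a b K (\<lambda>_. - 1 / h) \<Phi> \<Phi>' \<Psi>"
    using \<open>0 < h\<close> assms
    by unfold_locales
      (auto intro!: derivative_eq_intros simp: K_def \<Phi>_def \<Phi>'_def \<Psi>_def b field_simps
        power2_eq_square power3_eq_cube)
  then show ?thesis
    by blast
qed

lemma endpoint_test_functions_nonzero:
  fixes a b \<xi> :: real
  assumes "a < b" "\<xi> \<noteq> 0"
  shows "\<exists>K K' \<Phi> \<Phi>' \<Psi>. endpoint_test_functions \<xi> a b K K' \<Phi> \<Phi>' \<Psi>"
proof -
  define h where "h = b - a"
  have "0 < h" and b: "b = a + h"
    using assms by (auto simp: h_def)
  define sh where "sh = sinh (\<xi> * h)"
  define ch where "ch = cosh (\<xi> * h)"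
  have "sh \<noteq> 0"
    using assms \<open>0 < h\<close> by (simp add: sh_def)
  define K where "K = (\<lambda>y. sinh (\<xi> * (b - y)) / sh)"
  define K' where "K' = (\<lambda>y. - \<xi> * cosh (\<xi> * (b - y)) / sh)"
  define \<Phi> where "\<Phi> = (\<lambda>y. - (y - a) * cosh (\<xi> * (b - y)) / (2 * \<xi> * sh)
    + h * sinh (\<xi> * (y - a)) / (2 * \<xi> * sh\<^sup>2))"
  define \<Phi>' where "\<Phi>' = (\<lambda>y. - (cosh (\<xi> * (b - y)) - \<xi> * (y - a) * sinh (\<xi> * (b - y))) / (2 * \<xi> * sh)
    + h * cosh (\<xi> * (y - a)) / (2 * sh\<^sup>2))"
  define \<Psi> where "\<Psi> = (\<lambda>y. (\<Phi>' y - K' y / \<xi>\<^sup>2) / \<xi>\<^sup>2)"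
  define P where "P = (sh - \<xi> * h) / (2 * \<xi> * sh\<^sup>2)"
  have "0 < P"
    unfolding P_def sh_def using sinh_minus_self_div_pos assms \<open>0 < h\<close> by blast
  have \<Phi>'_a: "\<Phi>' a = - ch / (2 * \<xi> * sh) + h / (2 * sh\<^sup>2)"
    and \<Phi>'_b: "\<Phi>' b = - 1 / (2 * \<xi> * sh) + h * ch / (2 * sh\<^sup>2)"
    by (simp_all add: \<Phi>'_def b ch_def sh_def)
  have sum: "\<Phi>' a + \<Phi>' b = - (ch + 1) * P"
    unfolding \<Phi>'_a \<Phi>'_b P_def using \<open>sh \<noteq> 0\<close> assms by (simp add: field_simps power2_eq_square)
  have diff: "\<Psi> a - \<Psi> b = (ch - 1) * P / \<xi>\<^sup>2"
    unfolding \<Psi>_def \<Phi>'_a \<Phi>'_b P_def using \<open>sh \<noteq> 0\<close> assms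
    by (simp add: K'_def b ch_def[symmetric] field_simps power2_eq_square)
  have cosh_le: "(ch - 1) / \<xi>\<^sup>2 \<le> h\<^sup>2 / 4 * (ch + 1)"
    using cosh_minus_one_le[of "\<xi> * h"] assms by (simp add: ch_def field_simps power_mult_distrib)
  have "(ch - 1) * P / \<xi>\<^sup>2 \<le> h\<^sup>2 / 4 * (ch + 1) * P"
    using mult_right_mono[OF cosh_le less_imp_le[OF \<open>0 < P\<close>]] by simp
  then have diff_le: "\<Psi> a - \<Psi> b \<le> (b - a)\<^sup>2 / 4 * - (\<Phi>' a + \<Phi>' b)"
    unfolding diff sum h_def[symmetric] by (simp add: algebra_simps)
  have "0 < ch + 1"
    using cosh_real_ge_1[of "\<xi> * h"] by (simp add: ch_def)
  have derivs: "(K has_real_derivative K' y) (at y)" "(K' has_real_derivative \<xi>\<^sup>2 * K y) (at y)"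
    "(\<Phi> has_real_derivative \<Phi>' y) (at y)" "(\<Phi>' has_real_derivative \<xi>\<^sup>2 * \<Phi> y + K y) (at y)" for y
    unfolding K_def K'_def \<Phi>_def \<Phi>'_def using \<open>sh \<noteq> 0\<close> assms
    by (auto intro!: derivative_eq_intros simp: field_simps power2_eq_square)
  have "endpoint_test_functions \<xi> a b K K' \<Phi> \<Phi>' \<Psi>"
  proof unfold_locales
    show "(\<Psi> has_real_derivative \<Phi> y) (at y)" for y
      unfolding \<Psi>_def using assms
      by (auto intro!: derivative_eq_intros derivs(2,4) simp: field_simps power2_eq_square)
    show "0 \<le> K y" if "y \<in> {a..b}" for y
      using sinh_mult_div_sinh_mult_nonneg[of "b - y" h \<xi>] that \<open>0 < h\<close> by (simp add: K_def sh_def)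
    show "K a = 1" "K b = 0" "\<Phi> a = 0" "\<Phi> b = 0"
      using \<open>sh \<noteq> 0\<close> assms by (auto simp: K_def \<Phi>_def b sh_def field_simps power2_eq_square)
    show "\<Phi>' a + \<Phi>' b < 0"
      using \<open>0 < P\<close> \<open>0 < ch + 1\<close> by (simp add: sum mult_neg_pos)
  qed (use assms derivs diff_le in auto)
  then show ?thesis
    by blast
qed

lemma endpoint_test_functions_exist:
  fixes a b \<xi> :: real
  assumes "a < b"
  shows "\<exists>K K' \<Phi> \<Phi>' \<Psi>. endpoint_test_functions \<xi> a b K K' \<Phi> \<Phi>' \<Psi>"
  using endpoint_test_functions_zero[OF assms] endpoint_test_functions_nonzero[OF assms]
  by (cases "\<xi> = 0") auto

section \<open>The error on one knot interval\<close>

(* e i plays the role of the i-th derivative of F - I_4(F) on one knot interval [a, b]. *)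
locale interval_error =
  fixes \<xi> a b M :: real and e :: "nat \<Rightarrow> real \<Rightarrow> real"
  assumes a_less_b: "a < b"
    and has_deriv: "\<And>i y. i < 4 \<Longrightarrow> y \<in> {a..b} \<Longrightarrow>
      (e i has_real_derivative e (Suc i) y) (at y within {a..b})"
    and left_zero: "e 0 a = 0" and right_zero: "e 0 b = 0"
    and op_bound: "\<And>y. y \<in> {a..b} \<Longrightarrow> \<bar>e 4 y - 2 * \<xi>\<^sup>2 * e 2 y + \<xi> ^ 4 * e 0 y\<bar> \<le> M"
begin

lemma M_nonneg: "0 \<le> M"
  using op_bound[of a] a_less_b by (auto intro: order_trans[OF abs_ge_zero])

lemma has_deriv_upto_3:
  assumes "y \<in> {a..b}"
  shows "(e 0 has_real_derivative e 1 y) (at y within {a..b})"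
    and "(e 1 has_real_derivative e 2 y) (at y within {a..b})"
    and "(e 2 has_real_derivative e 3 y) (at y within {a..b})"
    and "(e 3 has_real_derivative e 4 y) (at y within {a..b})"
  using has_deriv[OF _ assms, of 0] has_deriv[OF _ assms, of 1] has_deriv[OF _ assms, of 2]
    has_deriv[OF _ assms, of 3]
  by (simp_all add: numeral_eq_Suc)

lemma uminus: "interval_error \<xi> a b M (\<lambda>i y. - e i y)"
proof unfold_locales
  show "((\<lambda>y. - e i y) has_real_derivative - e (Suc i) y) (at y within {a..b})"
    if "i < 4" "y \<in> {a..b}" for i y
    using has_deriv[OF that] by (rule DERIV_minus)
  show "\<bar>- e 4 y - 2 * \<xi>\<^sup>2 * - e 2 y + \<xi> ^ 4 * - e 0 y\<bar> \<le> M" if "y \<in> {a..b}" for y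
    using op_bound[OF that] by (simp add: abs_minus_commute algebra_simps)
qed (use a_less_b left_zero right_zero in auto)

lemma reflect: "interval_error \<xi> a b M (\<lambda>i y. (-1) ^ i * e i (a + b - y))"
proof unfold_locales
  show "((\<lambda>y. (-1) ^ i * e i (a + b - y)) has_real_derivative (-1) ^ Suc i * e (Suc i) (a + b - y))
      (at y within {a..b})" if "i < 4" "y \<in> {a..b}" for i y
  proof -
    have image: "(\<lambda>y. a + b - y) ` {a..b} = {a..b}"
      by (auto intro!: image_eqI[where x = "a + b - _"])
    have "(e i has_real_derivative e (Suc i) (a + b - y))
        (at (a + b - y) within (\<lambda>y. a + b - y) ` {a..b})"
      unfolding image using has_deriv[of i "a + b - y"] that by auto
    moreover have "((\<lambda>y. a + b - y) has_real_derivative -1) (at y within {a..b})"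
      by (auto intro!: derivative_eq_intros)
    ultimately have "(e i \<circ> (\<lambda>y. a + b - y) has_real_derivative e (Suc i) (a + b - y) * -1)
        (at y within {a..b})"
      by (rule DERIV_image_chain)
    from DERIV_cmult[OF this, of "(-1) ^ i"] show ?thesis
      by (simp add: o_def)
  qed
  show "\<bar>(-1) ^ 4 * e 4 (a + b - y) - 2 * \<xi>\<^sup>2 * ((-1) ^ 2 * e 2 (a + b - y))
      + \<xi> ^ 4 * ((-1) ^ 0 * e 0 (a + b - y))\<bar> \<le> M" if "y \<in> {a..b}" for y
    using op_bound[of "a + b - y"] that by simp
qed (use a_less_b left_zero right_zero in auto)

lemma abs_D2_minus_xi2_le:
  assumes "\<bar>e 2 a - \<xi>\<^sup>2 * e 0 a\<bar> \<le> A" "\<bar>e 2 b - \<xi>\<^sup>2 * e 0 b\<bar> \<le> A" "y \<in> {a..b}"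
  shows "\<bar>e 2 y - \<xi>\<^sup>2 * e 0 y\<bar> \<le> A + (b - a)\<^sup>2 / 8 * M"
proof (rule abs_le_by_max_principle[of a b "\<xi>\<^sup>2" "\<lambda>t. e 2 t - \<xi>\<^sup>2 * e 0 t"
      "\<lambda>t. e 3 t - \<xi>\<^sup>2 * e 1 t" "\<lambda>t. e 4 t - \<xi>\<^sup>2 * e 2 t"])
  show "((\<lambda>t. e 2 t - \<xi>\<^sup>2 * e 0 t) has_real_derivative e 3 t - \<xi>\<^sup>2 * e 1 t) (at t within {a..b})"
    "((\<lambda>t. e 3 t - \<xi>\<^sup>2 * e 1 t) has_real_derivative e 4 t - \<xi>\<^sup>2 * e 2 t) (at t within {a..b})"
    if "t \<in> {a..b}" for t
    using has_deriv_upto_3[OF that] by (auto intro!: derivative_eq_intros)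
  show "\<bar>e 4 t - \<xi>\<^sup>2 * e 2 t - \<xi>\<^sup>2 * (e 2 t - \<xi>\<^sup>2 * e 0 t)\<bar> \<le> M" if "t \<in> {a..b}" for t
    using op_bound[OF that] by (simp add: algebra_simps power2_eq_square power4_eq_xxxx)
qed (use assms a_less_b in auto)

lemma abs_e0_le:
  assumes "\<bar>e 2 a - \<xi>\<^sup>2 * e 0 a\<bar> \<le> A" "\<bar>e 2 b - \<xi>\<^sup>2 * e 0 b\<bar> \<le> A" "y \<in> {a..b}"
  shows "\<bar>e 0 y\<bar> \<le> (b - a)\<^sup>2 / 8 * (A + (b - a)\<^sup>2 / 8 * M)"
  using abs_le_by_max_principle[of a b "\<xi>\<^sup>2" "e 0" "e 1" "e 2" "A + (b - a)\<^sup>2 / 8 * M" 0 y]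
    abs_D2_minus_xi2_le[OF assms(1,2)] has_deriv_upto_3 left_zero right_zero a_less_b assms(3)
  by auto

lemma Green_endpoint_inequality:
  assumes "endpoint_test_functions \<xi> a b K K' \<Phi> \<Phi>' \<Psi>"
  shows "e 1 a \<le> \<Phi>' a * (e 2 a - \<xi>\<^sup>2 * e 0 a) - \<Phi>' b * (e 2 b - \<xi>\<^sup>2 * e 0 b) + M * (\<Psi> a - \<Psi> b)"
proof -
  interpret T: endpoint_test_functions \<xi> a b K K' \<Phi> \<Phi>' \<Psi>
    by (rule assms)
  define W where "W = (\<lambda>y. K y * e 1 y - K' y * e 0 y + \<Phi> y * (e 3 y - \<xi>\<^sup>2 * e 1 y)
    - \<Phi>' y * (e 2 y - \<xi>\<^sup>2 * e 0 y) - M * \<Psi> y)"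
  \<comment> \<open>The Green concomitant of \<open>e\<close> and \<open>\<Phi>\<close>, corrected by \<open>K\<close> and \<open>M \<Psi>\<close> so that its
      derivative is \<open>\<Phi> (L e - M)\<close>.\<close>
  have "W a \<le> W b"
  proof (rule DERIV_nonneg_imp_le_Icc[of a b W
        "\<lambda>y. \<Phi> y * (e 4 y - 2 * \<xi>\<^sup>2 * e 2 y + \<xi> ^ 4 * e 0 y - M)"])
    show "(W has_real_derivative \<Phi> y * (e 4 y - 2 * \<xi>\<^sup>2 * e 2 y + \<xi> ^ 4 * e 0 y - M))
        (at y within {a..b})" if "y \<in> {a..b}" for y
    proof -
      note e = has_deriv_upto_3[OF that]
      have T: "(K has_real_derivative K' y) (at y within {a..b})"
        "(K' has_real_derivative \<xi>\<^sup>2 * K y) (at y within {a..b})"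
        "(\<Phi> has_real_derivative \<Phi>' y) (at y within {a..b})"
        "(\<Phi>' has_real_derivative \<xi>\<^sup>2 * \<Phi> y + K y) (at y within {a..b})"
        "(\<Psi> has_real_derivative \<Phi> y) (at y within {a..b})"
        using T.K_deriv T.K'_deriv T.\<Phi>_deriv T.\<Phi>'_deriv T.\<Psi>_deriv
        by (auto intro: has_field_derivative_at_within)
      show ?thesis
        unfolding W_def
        by (rule derivative_eq_intros e T refl)+
          (simp add: algebra_simps power2_eq_square power4_eq_xxxx)
    qed
    show "0 \<le> \<Phi> y * (e 4 y - 2 * \<xi>\<^sup>2 * e 2 y + \<xi> ^ 4 * e 0 y - M)" if "y \<in> {a..b}" for y
      using T.\<Phi>_nonpos[OF that] op_bound[OF that] by (intro mult_nonpos_nonpos) (auto simp: abs_le_iff)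
  qed (use a_less_b in simp)
  then show ?thesis
    using T.K_left T.K_right T.\<Phi>_left T.\<Phi>_right left_zero right_zero
    by (simp add: W_def algebra_simps)
qed

lemma deriv_left_neg:
  assumes "\<bar>e 2 b - \<xi>\<^sup>2 * e 0 b\<bar> \<le> e 2 a - \<xi>\<^sup>2 * e 0 a"
    and "(b - a)\<^sup>2 / 4 * M < e 2 a - \<xi>\<^sup>2 * e 0 a"
  shows "e 1 a < 0"
proof -
  obtain K K' \<Phi> \<Phi>' \<Psi> where T: "endpoint_test_functions \<xi> a b K K' \<Phi> \<Phi>' \<Psi>"
    using endpoint_test_functions_exist[OF a_less_b] by blast
  interpret T: endpoint_test_functions \<xi> a b K K' \<Phi> \<Phi>' \<Psi>
    by (rule T)
  define sa sb where "sa = e 2 a - \<xi>\<^sup>2 * e 0 a" and "sb = e 2 b - \<xi>\<^sup>2 * e 0 b"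
  have "e 1 a \<le> \<Phi>' a * sa - \<Phi>' b * sb + M * (\<Psi> a - \<Psi> b)"
    using Green_endpoint_inequality[OF T] by (simp add: sa_def sb_def)
  also have "\<dots> \<le> \<Phi>' a * sa + \<Phi>' b * sa + M * ((b - a)\<^sup>2 / 4 * - (\<Phi>' a + \<Phi>' b))"
  proof -
    have "- sb \<le> sa"
      using assms(1) by (simp add: sa_def sb_def abs_le_iff)
    then have "\<Phi>' b * - sb \<le> \<Phi>' b * sa"
      using T.\<Phi>'_right_nonneg by (rule mult_left_mono)
    moreover have "M * (\<Psi> a - \<Psi> b) \<le> M * ((b - a)\<^sup>2 / 4 * - (\<Phi>' a + \<Phi>' b))"
      using T.\<Psi>_diff_le M_nonneg by (rule mult_left_mono)
    ultimately show ?thesis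
      by simp
  qed
  also have "\<dots> = - (\<Phi>' a + \<Phi>' b) * ((b - a)\<^sup>2 / 4 * M - sa)"
    by (simp add: algebra_simps)
  also have "\<dots> < 0"
    using T.\<Phi>'_sum_neg assms(2) by (intro mult_pos_neg) (auto simp: sa_def)
  finally show ?thesis .
qed

lemma deriv_left_sign:
  assumes "\<bar>e 2 b - \<xi>\<^sup>2 * e 0 b\<bar> \<le> \<bar>e 2 a - \<xi>\<^sup>2 * e 0 a\<bar>"
    and "(b - a)\<^sup>2 / 4 * M < \<bar>e 2 a - \<xi>\<^sup>2 * e 0 a\<bar>"
  shows "e 1 a * (e 2 a - \<xi>\<^sup>2 * e 0 a) < 0"
proof (cases "0 \<le> e 2 a - \<xi>\<^sup>2 * e 0 a")
  case True
  then have "e 1 a < 0"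
    using deriv_left_neg assms by simp
  moreover have "0 < e 2 a - \<xi>\<^sup>2 * e 0 a"
  proof -
    have "0 \<le> (b - a)\<^sup>2 / 4 * M"
      using M_nonneg by simp
    with assms(2) show ?thesis
      using abs_of_nonneg[OF True] by linarith
  qed
  ultimately show ?thesis
    by (simp add: mult_neg_pos)
next
  case False
  interpret neg: interval_error \<xi> a b M "\<lambda>i y. - e i y"
    by (rule uminus)
  have "- e 1 a < 0"
    using neg.deriv_left_neg assms False by (simp add: abs_minus_commute)
  with False show ?thesis
    by (simp add: mult_pos_neg)
qed

lemma deriv_right_sign:
  assumes "\<bar>e 2 a - \<xi>\<^sup>2 * e 0 a\<bar> \<le> \<bar>e 2 b - \<xi>\<^sup>2 * e 0 b\<bar>"
    and "(b - a)\<^sup>2 / 4 * M < \<bar>e 2 b - \<xi>\<^sup>2 * e 0 b\<bar>"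
  shows "0 < e 1 b * (e 2 b - \<xi>\<^sup>2 * e 0 b)"
proof -
  interpret refl: interval_error \<xi> a b M "\<lambda>i y. (-1) ^ i * e i (a + b - y)"
    by (rule reflect)
  show ?thesis
    using refl.deriv_left_sign assms by simp
qed

end

lemma knots_less:
  fixes ts :: "nat \<Rightarrow> real"
  assumes inc: "\<forall>j. 1 \<le> j \<and> j < n \<longrightarrow> ts j < ts (Suc j)"
    and "1 \<le> i" "i < k" "k \<le> n"
  shows "ts i < ts k"
  using \<open>i < k\<close> \<open>k \<le> n\<close>
proof (induction k)
  case 0
  then show ?case
    by simp
next
  case (Suc k)
  have "ts k < ts (Suc k)"
    using inc \<open>1 \<le> i\<close> Suc.prems by auto
  then show ?case
    using Suc by (cases "i = k") auto
qed

lemma knots_le: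
  fixes ts :: "nat \<Rightarrow> real"
  assumes "\<forall>j. 1 \<le> j \<and> j < n \<longrightarrow> ts j < ts (Suc j)"
    and "1 \<le> i" "i \<le> k" "k \<le> n"
  shows "ts i \<le> ts k"
  using knots_less[OF assms(1,2)] assms(3,4) by (cases "i = k") (auto intro: less_imp_le)

lemma knot_interval_cover:
  fixes ts :: "nat \<Rightarrow> real"
  assumes "2 \<le> n" "t \<in> {ts 1..ts n}"
  shows "\<exists>j. 1 \<le> j \<and> j < n \<and> t \<in> {ts j..ts (Suc j)}"
proof -
  define J where "J = {k. 1 \<le> k \<and> k < n \<and> ts k \<le> t}"
  have "finite J" "1 \<in> J"
    using assms by (auto simp: J_def)
  define j where "j = Max J"
  have "j \<in> J"
    unfolding j_def using \<open>finite J\<close> \<open>1 \<in> J\<close> by (intro Max_in) auto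
  then have j: "1 \<le> j" "j < n" "ts j \<le> t"
    by (auto simp: J_def)
  have "t \<le> ts (Suc j)"
  proof (cases "Suc j = n")
    case True
    then show ?thesis
      using assms by simp
  next
    case False
    then have "Suc j \<notin> J"
      using Max_ge[OF \<open>finite J\<close>, of "Suc j"] by (auto simp: j_def)
    then show ?thesis
      using False j by (auto simp: J_def)
  qed
  with j show ?thesis
    by auto
qed

lemma knot_D2_minus_xi2_bound:
  fixes ts :: "nat \<Rightarrow> real" and E :: "nat \<Rightarrow> real \<Rightarrow> real"
  assumes "2 \<le> n"
    and gaps: "\<And>j. 1 \<le> j \<Longrightarrow> j < n \<Longrightarrow> ts (Suc j) - ts j \<le> \<Delta>"
    and pieces: "\<And>j. 1 \<le> j \<Longrightarrow> j < n \<Longrightarrow> \<exists>e. interval_error \<xi> (ts j) (ts (Suc j)) M e \<and>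
      (\<forall>i\<le>2. \<forall>y\<in>{ts j..ts (Suc j)}. e i y = E i y)"
    and first: "E 1 (ts 1) = 0" and last: "E 1 (ts n) = 0"
    and "1 \<le> k" "k \<le> n"
  shows "\<bar>E 2 (ts k) - \<xi>\<^sup>2 * E 0 (ts k)\<bar> \<le> \<Delta>\<^sup>2 / 4 * M"
proof -
  define \<sigma> where "\<sigma> y = E 2 y - \<xi>\<^sup>2 * E 0 y" for y
  define m where "m = Max ((\<lambda>k. \<bar>\<sigma> (ts k)\<bar>) ` {1..n})"
  have le_m: "\<bar>\<sigma> (ts k)\<bar> \<le> m" if "1 \<le> k" "k \<le> n" for k
    unfolding m_def using that by (intro Max_ge) auto
  have "m \<in> (\<lambda>k. \<bar>\<sigma> (ts k)\<bar>) ` {1..n}"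
    unfolding m_def using \<open>2 \<le> n\<close> by (intro Max_in) auto
  then obtain j where j: "1 \<le> j" "j \<le> n" "\<bar>\<sigma> (ts j)\<bar> = m"
    by auto
  \<comment> \<open>At a knot where \<open>\<bar>\<sigma>\<bar>\<close> is maximal, the endpoint lemmas applied to the intervals on
      both sides give opposite signs for \<open>E 1 * \<sigma>\<close>; at the outer knots \<open>E 1\<close> vanishes.\<close>
  have "m \<le> \<Delta>\<^sup>2 / 4 * M"
  proof (rule ccontr)
    assume "\<not> m \<le> \<Delta>\<^sup>2 / 4 * M"
    have signs: "(\<bar>\<sigma> (ts i)\<bar> = m \<longrightarrow> E 1 (ts i) * \<sigma> (ts i) < 0) \<and>
        (\<bar>\<sigma> (ts (Suc i))\<bar> = m \<longrightarrow> 0 < E 1 (ts (Suc i)) * \<sigma> (ts (Suc i)))"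
      if i: "1 \<le> i" "i < n" for i
    proof -
      obtain e where "interval_error \<xi> (ts i) (ts (Suc i)) M e"
        and agree: "\<forall>l\<le>2. \<forall>y\<in>{ts i..ts (Suc i)}. e l y = E l y"
        using pieces[OF i] by blast
      then interpret interval_error \<xi> "ts i" "ts (Suc i)" M e
        by simp
      have at_knots: "e l (ts i) = E l (ts i)" "e l (ts (Suc i)) = E l (ts (Suc i))" if "l \<le> 2" for l
        using agree a_less_b that by auto
      have "(ts (Suc i) - ts i)\<^sup>2 \<le> \<Delta>\<^sup>2"
        using gaps[OF i] a_less_b by (intro power_mono) auto
      then have "(ts (Suc i) - ts i)\<^sup>2 / 4 * M \<le> \<Delta>\<^sup>2 / 4 * M"
        using M_nonneg by (intro mult_right_mono divide_right_mono) auto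
      with \<open>\<not> m \<le> \<Delta>\<^sup>2 / 4 * M\<close> have "(ts (Suc i) - ts i)\<^sup>2 / 4 * M < m"
        by linarith
      then show ?thesis
        using deriv_left_sign deriv_right_sign le_m i by (auto simp: \<sigma>_def at_knots)
    qed
    have "E 1 (ts j) * \<sigma> (ts j) < 0" if "j < n"
      using signs[of j] j that by auto
    moreover have "0 < E 1 (ts j) * \<sigma> (ts j)" if "1 < j"
      using signs[of "j - 1"] j that by auto
    ultimately show False
      using first last j \<open>2 \<le> n\<close> by (cases "j = 1"; cases "j = n") auto
  qed
  then show ?thesis
    using le_m[OF \<open>1 \<le> k\<close> \<open>k \<le> n\<close>] by (simp add: \<sigma>_def)
qed

lemma piecewise_error_bound:
  fixes ts :: "nat \<Rightarrow> real" and E :: "nat \<Rightarrow> real \<Rightarrow> real"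
  assumes "2 \<le> n"
    and gaps: "\<And>j. 1 \<le> j \<Longrightarrow> j < n \<Longrightarrow> ts (Suc j) - ts j \<le> \<Delta>"
    and pieces: "\<And>j. 1 \<le> j \<Longrightarrow> j < n \<Longrightarrow> \<exists>e. interval_error \<xi> (ts j) (ts (Suc j)) M e \<and>
      (\<forall>i\<le>2. \<forall>y\<in>{ts j..ts (Suc j)}. e i y = E i y)"
    and first: "E 1 (ts 1) = 0" and last: "E 1 (ts n) = 0"
    and t: "t \<in> {ts 1..ts n}"
  shows "\<bar>E 0 t\<bar> \<le> 3 / 64 * \<Delta> ^ 4 * M"
proof -
  obtain j where j: "1 \<le> j" "j < n" "t \<in> {ts j..ts (Suc j)}"
    using knot_interval_cover[OF \<open>2 \<le> n\<close> t] by blast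
  obtain e where "interval_error \<xi> (ts j) (ts (Suc j)) M e"
    and agree: "\<forall>i\<le>2. \<forall>y\<in>{ts j..ts (Suc j)}. e i y = E i y"
    using pieces[OF j(1,2)] by blast
  interpret interval_error \<xi> "ts j" "ts (Suc j)" M e
    by fact
  define H where "H = (ts (Suc j) - ts j)\<^sup>2"
  have "H \<le> \<Delta>\<^sup>2"
    unfolding H_def using gaps[OF j(1,2)] a_less_b by (intro power_mono) auto
  have knots: "\<bar>e 2 y - \<xi>\<^sup>2 * e 0 y\<bar> \<le> \<Delta>\<^sup>2 / 4 * M" if "y \<in> {ts j, ts (Suc j)}" for y
    using knot_D2_minus_xi2_bound[OF assms(1-5), of j] knot_D2_minus_xi2_bound[OF assms(1-5), of "Suc j"]
      agree a_less_b j that by auto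
  have "\<bar>E 0 t\<bar> = \<bar>e 0 t\<bar>"
    using agree j by auto
  also have "\<dots> \<le> H / 8 * (\<Delta>\<^sup>2 / 4 * M + H / 8 * M)"
    unfolding H_def by (rule abs_e0_le) (use knots j in auto)
  also have "\<dots> \<le> \<Delta>\<^sup>2 / 8 * (\<Delta>\<^sup>2 / 4 * M + \<Delta>\<^sup>2 / 8 * M)"
    using \<open>H \<le> \<Delta>\<^sup>2\<close> M_nonneg H_def
    by (intro mult_mono add_left_mono mult_right_mono divide_right_mono) auto
  also have "\<dots> = 3 / 64 * \<Delta> ^ 4 * M"
    by (simp add: field_simps power2_eq_square power4_eq_xxxx)
  finally show ?thesis .
qed

section \<open>Derivative chains and exponential splines\<close>

lemma deriv_chain_subset:
  assumes "deriv_chain k S f D" "T \<subseteq> S"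
  shows "deriv_chain k T f D"
  using assms unfolding deriv_chain_def
  by (blast intro: DERIV_subset continuous_on_subset)

lemma deriv_chain_continuous_on:
  assumes "deriv_chain k S f D" "i \<le> k"
  shows "continuous_on S (D i)"
proof (cases "i = k")
  case False
  then have "\<And>x. x \<in> S \<Longrightarrow> (D i has_real_derivative D (Suc i) x) (at x within S)"
    using assms by (simp add: deriv_chain_def)
  then show ?thesis
    by (rule DERIV_continuous_on)
qed (use assms in \<open>simp add: deriv_chain_def\<close>)

lemma deriv_chain_eq_Icc:
  fixes a b :: real
  assumes "a < b" "deriv_chain k {a..b} f D" "deriv_chain k' {a..b} f' D'"
    and "\<forall>x\<in>{a..b}. f x = f' x" "i \<le> k" "i \<le> k'" "x \<in> {a..b}"
  shows "D i x = D' i x"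
  using assms(5-7)
proof (induction i arbitrary: x)
  case 0
  then show ?case
    using assms(2-4) by (simp add: deriv_chain_def)
next
  case (Suc i)
  have "(D i has_real_derivative D (Suc i) x) (at x within {a..b})"
    using assms(2) Suc.prems by (simp add: deriv_chain_def)
  then have "(D' i has_real_derivative D (Suc i) x) (at x within {a..b})"
    by (rule has_field_derivative_transform_within[where d = 1]) (use Suc in auto)
  moreover have "(D' i has_real_derivative D' (Suc i) x) (at x within {a..b})"
    using assms(3) Suc.prems by (simp add: deriv_chain_def)
  ultimately show ?case
    using has_real_derivative_unique_Icc \<open>a < b\<close> Suc.prems by blast
qed

lemma deriv_chain_first_deriv:
  fixes a b :: real
  assumes "a < b" "deriv_chain k {a..b} f D" "0 < k" "x \<in> {a..b}"
    and "(f has_real_derivative f') (at x within {a..b})"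
  shows "D 1 x = f'"
proof -
  have "(D 0 has_real_derivative D 1 x) (at x within {a..b})"
    using assms(2-4) by (simp add: deriv_chain_def)
  then have "(f has_real_derivative D 1 x) (at x within {a..b})"
    by (rule has_field_derivative_transform_within[where d = 1])
      (use assms(2,4) in \<open>auto simp: deriv_chain_def\<close>)
  then show ?thesis
    using has_real_derivative_unique_Icc assms(1,4,5) by blast
qed

lemma continuous_on_Lchain:
  assumes "\<And>i. i \<le> length ls + j \<Longrightarrow> continuous_on S (D i)"
  shows "continuous_on S (Lchain ls D j)"
  using assms
proof (induction ls arbitrary: j)
  case Nil
  then show ?case
    by simp
next
  case (Cons l ls)
  have "continuous_on S (Lchain ls D (Suc j))" "continuous_on S (Lchain ls D j)"
    using Cons by auto
  then show ?case
    by (auto intro!: continuous_intros)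
qed

lemma abs_Lchain_le_SUP:
  fixes a b :: real
  assumes "deriv_chain k {a..b} F DF" "length ls \<le> k" "\<theta> \<in> {a..b}"
  shows "\<bar>Lchain ls DF 0 \<theta>\<bar> \<le> (SUP \<theta>\<in>{a..b}. \<bar>Lchain ls DF 0 \<theta>\<bar>)"
proof -
  have "continuous_on {a..b} (\<lambda>\<theta>. \<bar>Lchain ls DF 0 \<theta>\<bar>)"
    using continuous_on_Lchain[of ls 0 "{a..b}" DF] deriv_chain_continuous_on[OF assms(1)] assms(2)
    by (auto intro: continuous_intros)
  then have "bdd_above ((\<lambda>\<theta>. \<bar>Lchain ls DF 0 \<theta>\<bar>) ` {a..b})"
    by (intro bounded_imp_bdd_above compact_imp_bounded compact_continuous_image) auto
  with assms(3) show ?thesis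
    by (rule cSUP_upper)
qed

lemma Lchain_expand:
  "Lchain [\<xi>, \<xi>, -\<xi>, -\<xi>] D 0 t = D 4 t - 2 * \<xi>\<^sup>2 * D 2 t + \<xi> ^ 4 * D 0 t"
  by (simp add: numeral_eq_Suc algebra_simps power2_eq_square power4_eq_xxxx)

lemma interval_error_of_Espace:
  fixes \<xi> a b M :: real
  assumes "a < b"
    and F: "deriv_chain 4 {a..b} F DF" and g: "deriv_chain 2 {a..b} g Dg"
    and h: "Espace [\<xi>, \<xi>, -\<xi>, -\<xi>] h" and gh: "\<forall>t\<in>{a..b}. g t = h t"
    and "g a = F a" "g b = F b"
    and LF: "\<And>\<theta>. \<theta> \<in> {a..b} \<Longrightarrow> \<bar>Lchain [\<xi>, \<xi>, -\<xi>, -\<xi>] DF 0 \<theta>\<bar> \<le> M"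
  shows "\<exists>e. interval_error \<xi> a b M e \<and> (\<forall>i\<le>2. \<forall>y\<in>{a..b}. e i y = DF i y - Dg i y)"
proof -
  have length: "length [\<xi>, \<xi>, -\<xi>, -\<xi>] = 4"
    by simp
  obtain Dh where "deriv_chain 4 UNIV h Dh" and Lh: "\<And>t. Lchain [\<xi>, \<xi>, -\<xi>, -\<xi>] Dh 0 t = 0"
    using h unfolding Espace_def length by blast
  then have Dh: "deriv_chain 4 {a..b} h Dh"
    by (blast intro: deriv_chain_subset)
  define e where "e = (\<lambda>i y. DF i y - Dh i y)"
  have "interval_error \<xi> a b M e"
  proof unfold_locales
    show "(e i has_real_derivative e (Suc i) y) (at y within {a..b})" if "i < 4" "y \<in> {a..b}" for i y
      unfolding e_def using F Dh that by (intro DERIV_diff) (auto simp: deriv_chain_def)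
    show "e 0 a = 0" "e 0 b = 0"
      using F Dh gh assms(6,7) \<open>a < b\<close> by (auto simp: e_def deriv_chain_def)
    show "\<bar>e 4 y - 2 * \<xi>\<^sup>2 * e 2 y + \<xi> ^ 4 * e 0 y\<bar> \<le> M" if "y \<in> {a..b}" for y
    proof -
      have "e 4 y - 2 * \<xi>\<^sup>2 * e 2 y + \<xi> ^ 4 * e 0 y
          = Lchain [\<xi>, \<xi>, -\<xi>, -\<xi>] DF 0 y - Lchain [\<xi>, \<xi>, -\<xi>, -\<xi>] Dh 0 y"
        unfolding Lchain_expand e_def by (simp add: algebra_simps)
      with LF[OF that] Lh show ?thesis
        by simp
    qed
  qed (rule \<open>a < b\<close>)
  moreover have "e i y = DF i y - Dg i y" if "i \<le> 2" "y \<in> {a..b}" for i y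
    using deriv_chain_eq_Icc[OF \<open>a < b\<close> g Dh _ that(1) _ that(2)] gh that by (simp add: e_def)
  ultimately show ?thesis
    by blast
qed

lemma exp_spline_interval_error:
  fixes ts :: "nat \<Rightarrow> real"
  assumes inc: "\<forall>j. 1 \<le> j \<and> j < n \<longrightarrow> ts j < ts (Suc j)"
    and F: "deriv_chain 4 {ts 1..ts n} F DF" and g: "deriv_chain 2 {ts 1..ts n} g Dg"
    and spline: "exp_spline [\<xi>, \<xi>, -\<xi>, -\<xi>] ts n g"
    and interp: "\<forall>j. 1 \<le> j \<and> j \<le> n \<longrightarrow> g (ts j) = F (ts j)"
    and j: "1 \<le> j" "j < n"
  shows "\<exists>e. interval_error \<xi> (ts j) (ts (Suc j))
      (SUP \<theta>\<in>{ts 1..ts n}. \<bar>Lchain [\<xi>, \<xi>, -\<xi>, -\<xi>] DF 0 \<theta>\<bar>) e \<and>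
    (\<forall>i\<le>2. \<forall>y\<in>{ts j..ts (Suc j)}. e i y = DF i y - Dg i y)"
proof -
  have sub: "{ts j..ts (Suc j)} \<subseteq> {ts 1..ts n}"
    using knots_le[OF inc, of 1 j] knots_le[OF inc, of "Suc j" n] j by auto
  obtain h where "Espace [\<xi>, \<xi>, -\<xi>, -\<xi>] h" "\<forall>t\<in>{ts j..ts (Suc j)}. g t = h t"
    using spline j by (auto simp: exp_spline_def)
  then show ?thesis
  proof (rule interval_error_of_Espace[rotated 3])
    show "ts j < ts (Suc j)"
      using inc j by simp
    show "deriv_chain 4 {ts j..ts (Suc j)} F DF" "deriv_chain 2 {ts j..ts (Suc j)} g Dg"
      using F g sub by (blast intro: deriv_chain_subset)+
    show "g (ts j) = F (ts j)" "g (ts (Suc j)) = F (ts (Suc j))"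
      using interp j by auto
    show "\<bar>Lchain [\<xi>, \<xi>, -\<xi>, -\<xi>] DF 0 \<theta>\<bar> \<le> (SUP \<theta>\<in>{ts 1..ts n}. \<bar>Lchain [\<xi>, \<xi>, -\<xi>, -\<xi>] DF 0 \<theta>\<bar>)"
      if "\<theta> \<in> {ts j..ts (Suc j)}" for \<theta>
      by (rule abs_Lchain_le_SUP[OF F]) (use sub that in auto)
  qed
qed

theorem mainTheorem1:
  fixes \<xi> :: real and n :: nat and ts :: "nat \<Rightarrow> real"
    and F g :: "real \<Rightarrow> real" and DF :: "nat \<Rightarrow> real \<Rightarrow> real"
  assumes "n \<ge> 2"
    and "\<forall>j. 1 \<le> j \<and> j < n \<longrightarrow> ts j < ts (Suc j)"
    and "deriv_chain 4 {ts 1..ts n} F DF"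
    and "exp_spline [\<xi>, \<xi>, -\<xi>, -\<xi>] ts n g"
    and "\<forall>j. 1 \<le> j \<and> j \<le> n \<longrightarrow> g (ts j) = F (ts j)"
    and "(g has_real_derivative DF 1 (ts 1)) (at (ts 1) within {ts 1..ts n})"
    and "(g has_real_derivative DF 1 (ts n)) (at (ts n) within {ts 1..ts n})"
  shows "\<forall>t\<in>{ts 1..ts n}. \<bar>F t - g t\<bar> \<le>
           5 / 64 * (Max {ts (Suc j) - ts j | j. 1 \<le> j \<and> j < n}) ^ 4 *
           (SUP \<theta>\<in>{ts 1..ts n}. \<bar>Lchain [\<xi>, \<xi>, -\<xi>, -\<xi>] DF 0 \<theta>\<bar>)"
proof
  fix t
  assume t: "t \<in> {ts 1..ts n}"
  define \<Delta> where "\<Delta> = Max {ts (Suc j) - ts j | j. 1 \<le> j \<and> j < n}"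
  define M where "M = (SUP \<theta>\<in>{ts 1..ts n}. \<bar>Lchain [\<xi>, \<xi>, -\<xi>, -\<xi>] DF 0 \<theta>\<bar>)"
  have order: "length [\<xi>, \<xi>, -\<xi>, -\<xi>] - 2 = 2"
    by simp
  obtain Dg where g: "deriv_chain 2 {ts 1..ts n} g Dg"
    using assms(4) unfolding exp_spline_def Ck_def order by blast
  have gaps: "ts (Suc j) - ts j \<le> \<Delta>" if "1 \<le> j" "j < n" for j
    unfolding \<Delta>_def using that by (intro Max_ge) auto
  have "ts 1 < ts n"
    using knots_less[OF assms(2), of 1 n] assms(1) by simp
  then have "Dg 1 (ts 1) = DF 1 (ts 1)" "Dg 1 (ts n) = DF 1 (ts n)"
    using deriv_chain_first_deriv[OF _ g] assms(6,7) by auto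
  then have error: "\<bar>DF 0 t - Dg 0 t\<bar> \<le> 3 / 64 * \<Delta> ^ 4 * M"
    using piecewise_error_bound[OF assms(1) gaps exp_spline_interval_error[OF assms(2,3) g assms(4,5)] _ _ t]
    by (simp add: M_def)
  have "\<bar>Lchain [\<xi>, \<xi>, -\<xi>, -\<xi>] DF 0 t\<bar> \<le> M"
    unfolding M_def by (rule abs_Lchain_le_SUP[OF assms(3) _ t]) simp
  then have "0 \<le> M"
    by (meson abs_ge_zero order_trans)
  have "\<bar>F t - g t\<bar> = \<bar>DF 0 t - Dg 0 t\<bar>"
    using assms(3) g t by (simp add: deriv_chain_def)
  also have "\<dots> \<le> 3 / 64 * \<Delta> ^ 4 * M"
    by (rule error)
  also have "\<dots> \<le> 5 / 64 * \<Delta> ^ 4 * M"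
    using \<open>0 \<le> M\<close> by (intro mult_right_mono) auto
  finally show "\<bar>F t - g t\<bar> \<le> 5 / 64 * \<Delta> ^ 4 * M" .
qed

end
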